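(* Let the attribute space be $\{1,\dots,d\}^m$ and let $p(\cdot\mid z)$ be an additive energy distribution for every $z\in\{1,\dots,d\}^m$. Suppose $\mathcal{Z}^{\mathsf{train}}$ (the support of the training prior $p(z)$) consists of $s$ attribute vectors drawn uniformly at random (with replacement) from $\{1,\dots,d\}^m$, and let $q(x,z)=q(z)q(x\mid z)$ be a test distribution with $q(x\mid z)=p(x\mid z)$ for all $z$ and with attribute support $\mathcal{Z}^{\mathsf{test}}=\{1,\dots,d\}^m$. Let $c>0$. Suppose $s\ge 2c(md+d\log d)$ with $d$ sufficiently large, that $\hat E,\hat B$ are such that the additive energy classifier satisfies $\hat p(z\mid x)=p(z\mid x)$ for all $z\in\mathcal{Z}^{\mathsf{train}}$ and $x\in\mathbb{R}^n$, and that $\hat q(z)=q(z)$ for all $z\in\{1,\dots,d\}^m$. Then, with probability greater than $1-\frac1c$ (over the random draw of $\mathcal{Z}^{\mathsf{train}}$), the CRM predictor satisfies $\hat q(z\mid x)=q(z\mid x)$ for all $z\in\{1,\dots,d\}^m$ and all $x\in\mathbb{R}^n$.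
   Context: $\sigma(z)\in\{0,1\}^{md}$ is the concatenation of one-hot encodings of $z_1,\dots,z_m$. An additive energy distribution (AED) family is $p(x\mid z)=\frac{1}{\mathbb{Z}(z)}\exp(-\langle\sigma(z),E(x)\rangle)$ for some $E:\mathbb{R}^n\to\mathbb{R}^{md}$, with $\mathbb{Z}(z)=\int\exp(-\langle\sigma(z),E(x)\rangle)dx<\infty$ and support $\mathbb{R}^n$. Given $\hat E:\mathbb{R}^n\to\mathbb{R}^{md}$ and $\hat B:\mathcal{Z}^{\mathsf{train}}\to\mathbb{R}$, the additive energy classifier is $\hat p(z\mid x)\propto\exp(-\langle\sigma(z),\hat E(x)\rangle+\log p(z)-\hat B(z))$, normalized over $z\in\mathcal{Z}^{\mathsf{train}}$. The extrapolated bias is $B^\star(z)=\log\mathbb{E}_{x\sim p(x)}\big[\exp(-\langle\sigma(z),\hat E(x)\rangle)/\sum_{\tilde z\in\mathcal{Z}^{\mathsf{train}}}\exp(-\langle\sigma(\tilde z),\hat E(x)\rangle+\log p(\tilde z)-\hat B(\tilde z))\big]$, with $p(x)$ the training marginal. Given a distribution $\hat q$ on attributes, the CRM predictor is $\hat q(z\mid x)\propto\exp(-\langle\sigma(z),\hat E(x)\rangle+\log\hat q(z)-B^\star(z))$, normalized over the support of $\hat q$. *)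

theory Defs
  imports "HOL-Probability.Probability"
begin

text \<open>Attribute vectors z in {1..d}^m are lists of length m with entries in {1..d}.
  Vectors in R^(md) are indexed by pairs (i,j) with i < m, j in {1..d}.\<close>

definition attrs :: "nat \<Rightarrow> nat \<Rightarrow> nat list set" where
  "attrs m d = {z. length z = m \<and> set z \<subseteq> {1..d}}"

definition sigma :: "nat list \<Rightarrow> nat \<times> nat \<Rightarrow> real" where
  "sigma z = (\<lambda>(i, j). if z ! i = j then 1 else 0)"

definition inner_md :: "nat \<Rightarrow> nat \<Rightarrow> (nat \<times> nat \<Rightarrow> real) \<Rightarrow> (nat \<times> nat \<Rightarrow> real) \<Rightarrow> real" where
  "inner_md m d u v = (\<Sum>ij\<in>{..<m} \<times> {1..d}. u ij * v ij)"

text \<open>Additive energy distribution family: Z(z) finite for every z (support is R^n automatically).\<close>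
definition AED_family :: "nat \<Rightarrow> nat \<Rightarrow> ('a::euclidean_space \<Rightarrow> nat \<times> nat \<Rightarrow> real) \<Rightarrow> bool" where
  "AED_family m d E \<longleftrightarrow>
     (\<forall>z\<in>attrs m d. integrable lborel (\<lambda>x. exp (- inner_md m d (sigma z) (E x))))"

definition partition_fn :: "nat \<Rightarrow> nat \<Rightarrow> ('a::euclidean_space \<Rightarrow> nat \<times> nat \<Rightarrow> real) \<Rightarrow> nat list \<Rightarrow> real" where
  "partition_fn m d E z = (\<integral>x. exp (- inner_md m d (sigma z) (E x)) \<partial>lborel)"

definition cond_dens :: "nat \<Rightarrow> nat \<Rightarrow> ('a::euclidean_space \<Rightarrow> nat \<times> nat \<Rightarrow> real) \<Rightarrow> nat list \<Rightarrow> 'a \<Rightarrow> real" where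
  "cond_dens m d E z x = exp (- inner_md m d (sigma z) (E x)) / partition_fn m d E z"

definition marginal :: "nat \<Rightarrow> nat \<Rightarrow> ('a::euclidean_space \<Rightarrow> nat \<times> nat \<Rightarrow> real) \<Rightarrow> nat list pmf \<Rightarrow> 'a \<Rightarrow> real" where
  "marginal m d E pz x = (\<Sum>z\<in>set_pmf pz. pmf pz z * cond_dens m d E z x)"

text \<open>Bayes posterior p(z | x) (also used for the test posterior q(z | x), since q(x|z) = p(x|z)).\<close>
definition posterior :: "nat \<Rightarrow> nat \<Rightarrow> ('a::euclidean_space \<Rightarrow> nat \<times> nat \<Rightarrow> real) \<Rightarrow> nat list pmf \<Rightarrow> nat list \<Rightarrow> 'a \<Rightarrow> real" where
  "posterior m d E pz z x = pmf pz z * cond_dens m d E z x / marginal m d E pz x"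

text \<open>Additive energy classifier hat p(z | x), normalized over Z^train = support of p(z).\<close>
definition aec_term :: "nat \<Rightarrow> nat \<Rightarrow> ('a \<Rightarrow> nat \<times> nat \<Rightarrow> real) \<Rightarrow> (nat list \<Rightarrow> real) \<Rightarrow> nat list pmf \<Rightarrow> nat list \<Rightarrow> 'a \<Rightarrow> real" where
  "aec_term m d Eh Bh pz z x = exp (- inner_md m d (sigma z) (Eh x) + ln (pmf pz z) - Bh z)"

definition aec :: "nat \<Rightarrow> nat \<Rightarrow> ('a \<Rightarrow> nat \<times> nat \<Rightarrow> real) \<Rightarrow> (nat list \<Rightarrow> real) \<Rightarrow> nat list pmf \<Rightarrow> nat list \<Rightarrow> 'a \<Rightarrow> real" where
  "aec m d Eh Bh pz z x = aec_term m d Eh Bh pz z x / (\<Sum>z'\<in>set_pmf pz. aec_term m d Eh Bh pz z' x)"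

text \<open>Extrapolated bias B*(z); the expectation over x ~ p(x) is the Lebesgue integral against the density p(x).\<close>
definition extrap_bias :: "nat \<Rightarrow> nat \<Rightarrow> ('a::euclidean_space \<Rightarrow> nat \<times> nat \<Rightarrow> real) \<Rightarrow> ('a \<Rightarrow> nat \<times> nat \<Rightarrow> real) \<Rightarrow> (nat list \<Rightarrow> real) \<Rightarrow> nat list pmf \<Rightarrow> nat list \<Rightarrow> real" where
  "extrap_bias m d E Eh Bh pz z =
     ln (\<integral>x. marginal m d E pz x *
              (exp (- inner_md m d (sigma z) (Eh x)) / (\<Sum>z'\<in>set_pmf pz. aec_term m d Eh Bh pz z' x)) \<partial>lborel)"

definition crm_term :: "nat \<Rightarrow> nat \<Rightarrow> ('a \<Rightarrow> nat \<times> nat \<Rightarrow> real) \<Rightarrow> (nat list \<Rightarrow> real) \<Rightarrow> nat list pmf \<Rightarrow> nat list \<Rightarrow> 'a \<Rightarrow> real" where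
  "crm_term m d Eh Bs qh z x = exp (- inner_md m d (sigma z) (Eh x) + ln (pmf qh z) - Bs z)"

definition crm :: "nat \<Rightarrow> nat \<Rightarrow> ('a \<Rightarrow> nat \<times> nat \<Rightarrow> real) \<Rightarrow> (nat list \<Rightarrow> real) \<Rightarrow> nat list pmf \<Rightarrow> nat list \<Rightarrow> 'a \<Rightarrow> real" where
  "crm m d Eh Bs qh z x = crm_term m d Eh Bs qh z x / (\<Sum>z'\<in>set_pmf qh. crm_term m d Eh Bs qh z' x)"

text \<open>Outcomes of s uniform draws with replacement from {1..d}^m.\<close>
definition draws :: "nat \<Rightarrow> nat \<Rightarrow> nat \<Rightarrow> nat list list set" where
  "draws m d s = {\<omega>. length \<omega> = s \<and> set \<omega> \<subseteq> attrs m d}"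

end

theory Submission
  imports Defs "HOL-Library.Function_Algebras" "HOL-Real_Asymp.Real_Asymp"
begin

(* If the training support T is affinely spanning, i.e. every affine function of sigma(z) that
   vanishes on T vanishes on all of {1..d}^m, then exact fitting of the additive energy classifier
   on T forces <sigma(z), Eh(x) - E(x)> to be a function of x plus a constant depending on z,
   first for z in T and then, by affine spanning, for every z.  The extrapolated bias absorbs
   these constants, so the CRM predictor is the Bayes posterior under q.

   It remains to show that s uniform draws are affinely spanning with probability tending to 1
   as d grows.  A failure comes with an affine function whose zero set Z contains the draws but
   is proper.  If |Z| <= (1 - 1/(4m)) d^m, then at most md + 1 draws leave the span of their
   predecessors and all others fall into Z.  Otherwise every coordinate is constant up to fewer
   than d/(4m) exceptional values; the exceptional (coordinate, value) pairs form a set S with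
   4|S| <= d which either every draw hits, or no draw hits exactly once.  Union bounds over S,
   resp. over the positions of the innovating draws, bound the failure probability. *)

section \<open>Counting attribute vectors and draws\<close>

lemma card_lists_nth_in:
  assumes "\<And>j. j < n \<Longrightarrow> finite (B j)"
  shows "card {z. length z = n \<and> (\<forall>j<n. z!j \<in> B j)} = (\<Prod>j<n. card (B j))"
  using assms
proof (induction n arbitrary: B)
  case 0
  then show ?case by simp
next
  case (Suc n)
  let ?tails = "{z. length z = n \<and> (\<forall>j<n. z!j \<in> B (Suc j))}"
  have eq: "{z. length z = Suc n \<and> (\<forall>j<Suc n. z!j \<in> B j)} = (\<lambda>(a, z). a # z) ` (B 0 \<times> ?tails)"
  proof (rule set_eqI, rule iffI)
    fix z assume z: "z \<in> {z. length z = Suc n \<and> (\<forall>j<Suc n. z!j \<in> B j)}"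
    then obtain a z' where "z = a # z'" by (cases z) auto
    with z show "z \<in> (\<lambda>(a, z). a # z) ` (B 0 \<times> ?tails)"
      by (auto intro!: image_eqI[where x="(a, z')"])
  qed (auto simp: nth_Cons split: nat.splits)
  have "inj (\<lambda>(a::'a, z). a # z)" by (auto simp: inj_def)
  moreover have "card ?tails = (\<Prod>j<n. card (B (Suc j)))"
    using Suc.prems by (intro Suc.IH) auto
  ultimately show ?case
    unfolding eq
    by (simp del: prod.lessThan_Suc add: card_image inj_on_subset card_cartesian_product prod.lessThan_Suc_shift)
qed

lemma attrs_conv_nth: "attrs m d = {z. length z = m \<and> (\<forall>j<m. z!j \<in> {1..d})}"
  by (auto simp: attrs_def set_conv_nth)

lemma card_attrs_fixed:
  assumes "J \<subseteq> {..<m}" "\<And>j. j \<in> J \<Longrightarrow> g j \<in> {1..d}"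
  shows "card {z\<in>attrs m d. \<forall>j\<in>J. z!j = g j} = d ^ (m - card J)"
proof -
  let ?B = "\<lambda>j. if j \<in> J then {g j} else {1..d}"
  have "{z\<in>attrs m d. \<forall>j\<in>J. z!j = g j} = {z. length z = m \<and> (\<forall>j<m. z!j \<in> ?B j)}"
    using assms unfolding attrs_conv_nth by auto
  then have "card {z\<in>attrs m d. \<forall>j\<in>J. z!j = g j} = (\<Prod>j<m. card (?B j))"
    using card_lists_nth_in[of m ?B] by simp
  also have "\<dots> = (\<Prod>j<m. if j \<in> J then 1 else d)"
    by (rule prod.cong) auto
  also have "\<dots> = d ^ card ({..<m} - J)"
    by (simp add: prod.If_cases Diff_eq)
  also have "card ({..<m} - J) = m - card J"
    using assms(1) by (simp add: card_Diff_subset finite_subset)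
  finally show ?thesis .
qed

lemma card_attrs: "card (attrs m d) = d ^ m"
  using card_attrs_fixed[of "{}" m] by simp

lemma finite_attrs: "finite (attrs m d)"
  using finite_lists_length_eq[of "{1..d}" m] by (simp add: attrs_def conj_commute)

lemma card_attrs_fixed_one:
  assumes "i < m" "a \<in> {1..d}"
  shows "card {z\<in>attrs m d. z!i = a} = d ^ (m - 1)"
  using card_attrs_fixed[of "{i}" m "\<lambda>_. a" d] assms by simp

lemma card_attrs_fixed_two:
  assumes "i < m" "j < m" "i \<noteq> j" "a \<in> {1..d}" "b \<in> {1..d}"
  shows "real (card {z\<in>attrs m d. z!i = a \<and> z!j = b}) = real d ^ m / real d ^ 2"
proof -
  have "{z\<in>attrs m d. z!i = a \<and> z!j = b} = {z\<in>attrs m d. \<forall>l\<in>{i, j}. z!l = (if l = i then a else b)}"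
    using assms by auto
  then have "card {z\<in>attrs m d. z!i = a \<and> z!j = b} = d ^ (m - 2)"
    using card_attrs_fixed[of "{i, j}" m "\<lambda>l. if l = i then a else b" d] assms
    by (simp add: numeral_2_eq_2)
  moreover have "m - 2 + 2 = m"
    using assms by linarith
  then have "real d ^ m = real d ^ (m - 2) * real d ^ 2"
    by (metis power_add)
  ultimately show ?thesis
    using assms by simp
qed

lemma finite_draws: "finite (draws m d s)"
  using finite_lists_length_eq[OF finite_attrs, of m d s] by (simp add: draws_def conj_commute)

lemma card_draws_all:
  "card {\<omega>\<in>draws m d s. \<forall>z\<in>set \<omega>. P z} = card {z\<in>attrs m d. P z} ^ s"
proof -
  have "{\<omega>\<in>draws m d s. \<forall>z\<in>set \<omega>. P z} = {xs. set xs \<subseteq> {z\<in>attrs m d. P z} \<and> length xs = s}"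
    by (auto simp: draws_def)
  then show ?thesis
    using card_lists_length_eq[of "{z\<in>attrs m d. P z}" s] finite_attrs by simp
qed

lemma card_draws: "card (draws m d s) = (d ^ m) ^ s"
  using card_draws_all[of m d s "\<lambda>_. True"] by (simp add: card_attrs)

lemma card_adaptive_lists_le:
  assumes "finite U" "\<And>j p. A j p \<subseteq> U"
    and "\<And>j p. j < n \<Longrightarrow> real (card (A j p)) \<le> b j"
  shows "real (card {w. length w = n \<and> (\<forall>j<n. w!j \<in> A j (take j w))}) \<le> (\<Prod>j<n. b j)"
  using assms(3)
proof (induction n)
  case 0
  have "{w. length w = 0 \<and> (\<forall>j<0. w!j \<in> A j (take j w))} = {[]}" by auto
  then show ?case by simp
next
  case (Suc n)
  let ?C = "\<lambda>n. {w. length w = n \<and> (\<forall>j<n. w!j \<in> A j (take j w))}"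
  have fin_C: "finite (?C n)"
    by (rule finite_subset[OF _ finite_lists_length_eq[OF assms(1), of n]])
       (use assms(2) in \<open>auto simp: set_conv_nth\<close>)
  have fin_A: "finite (A j p)" for j p
    using assms finite_subset by blast
  have "?C (Suc n) \<subseteq> (\<lambda>(u, x). u @ [x]) ` (SIGMA u:?C n. A n u)"
  proof
    fix w assume w: "w \<in> ?C (Suc n)"
    then have "w = take n w @ [w!n]"
      using take_Suc_conv_app_nth[of n w] by simp
    moreover have "take n w \<in> ?C n" "w!n \<in> A n (take n w)"
      using w by (auto simp: min_def)
    ultimately show "w \<in> (\<lambda>(u, x). u @ [x]) ` (SIGMA u:?C n. A n u)"
      by (intro image_eqI[where x="(take n w, w!n)"]) auto
  qed
  then have "card (?C (Suc n)) \<le> card ((\<lambda>(u, x). u @ [x]) ` (SIGMA u:?C n. A n u))"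
    using fin_C fin_A by (intro card_mono) auto
  also have "\<dots> \<le> card (SIGMA u:?C n. A n u)"
    using fin_C fin_A by (intro card_image_le) auto
  also have "\<dots> = (\<Sum>u\<in>?C n. card (A n u))"
    using fin_C fin_A by (simp add: card_SigmaI)
  finally have "real (card (?C (Suc n))) \<le> (\<Sum>u\<in>?C n. real (card (A n u)))"
    by (simp flip: of_nat_sum)
  also have "\<dots> \<le> real (card (?C n)) * b n"
    using Suc.prems by (simp add: sum_bounded_above)
  also have "\<dots> \<le> (\<Prod>j<n. b j) * b n"
    using Suc order_trans[OF of_nat_0_le_iff Suc.prems] by (intro mult_right_mono) auto
  finally show ?case by simp
qed

lemma sum_Pow_power_card:
  fixes x y :: "'a::comm_semiring_1"
  assumes "finite A"
  shows "(\<Sum>R\<in>Pow A. x ^ card R * y ^ (card A - card R)) = (x + y) ^ card A"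
proof -
  have "(x + y) ^ card A = (\<Sum>R\<in>Pow A. x ^ card R * y ^ card (A - R))"
    using prod_add[OF assms, of "\<lambda>_. x" "\<lambda>_. y"] by simp
  also have "\<dots> = (\<Sum>R\<in>Pow A. x ^ card R * y ^ (card A - card R))"
    using assms by (intro sum.cong refl) (auto simp: card_Diff_subset finite_subset)
  finally show ?thesis ..
qed

section \<open>Affine span of the one-hot encodings\<close>

definition fun_scale :: "real \<Rightarrow> ('a \<Rightarrow> real) \<Rightarrow> 'a \<Rightarrow> real" where
  "fun_scale r f = (\<lambda>x. r * f x)"

interpretation fun_space: vector_space "fun_scale :: real \<Rightarrow> ('a \<Rightarrow> real) \<Rightarrow> 'a \<Rightarrow> real"
  by unfold_locales (auto simp: fun_scale_def plus_fun_def algebra_simps)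

lemma (in vector_space) independent_if_outside_span_of_predecessors:
  fixes u :: "nat \<Rightarrow> 'b"
  assumes "\<And>j. j \<in> R \<Longrightarrow> u j \<notin> span (u ` {l\<in>R. l < j})"
  shows "independent (u ` (R \<inter> {..<n})) \<and> inj_on u (R \<inter> {..<n})"
proof (induction n)
  case 0
  then show ?case by (simp add: independent_empty)
next
  case (Suc n)
  show ?case
  proof (cases "n \<in> R")
    case False
    then have "R \<inter> {..<Suc n} = R \<inter> {..<n}" by (auto simp: less_Suc_eq)
    then show ?thesis using Suc by simp
  next
    case True
    have "R \<inter> {..<Suc n} = insert n (R \<inter> {..<n})" using True by (auto simp: less_Suc_eq)
    moreover have "{l\<in>R. l < n} = R \<inter> {..<n}" by auto
    then have "u n \<notin> span (u ` (R \<inter> {..<n}))" using assms True by metis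
    ultimately show ?thesis
      using Suc independent_insertI span_base by auto
  qed
qed

lemma fun_space_span_indicators:
  assumes "finite P" "\<And>q. q \<notin> P \<Longrightarrow> x q = 0"
  shows "x \<in> fun_space.span ((\<lambda>p q. if q = p then 1 else 0) ` P)"
proof -
  let ?e = "\<lambda>p q. if q = p then (1::real) else 0"
  have "(\<Sum>p\<in>A. fun_scale (x p) (?e p)) q = (if q \<in> A then x q else 0)" if "finite A" for A q
    using that by (induction A rule: finite_induct) (auto simp: fun_scale_def)
  then have "x = (\<Sum>p\<in>P. fun_scale (x p) (?e p))"
    using assms by fastforce
  also have "\<dots> \<in> fun_space.span (?e ` P)"
    by (intro fun_space.span_sum fun_space.span_scale fun_space.span_base) auto
  finally show ?thesis .
qed

text \<open>Restricting \<open>\<sigma>(z)\<close> to its index set and adding a constant coordinate \<open>(m, 0)\<close>,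
  which lies outside that set, turns affine functions of \<open>\<sigma>(z)\<close> into linear functionals.\<close>

definition aug_sigma :: "nat \<Rightarrow> nat \<Rightarrow> nat list \<Rightarrow> nat \<times> nat \<Rightarrow> real" where
  "aug_sigma m d z = (\<lambda>p. if p \<in> {..<m} \<times> {1..d} then sigma z p else if p = (m, 0) then 1 else 0)"

definition aug_functional :: "nat \<Rightarrow> nat \<Rightarrow> (nat \<times> nat \<Rightarrow> real) \<Rightarrow> real \<Rightarrow> (nat \<times> nat \<Rightarrow> real) \<Rightarrow> real" where
  "aug_functional m d v t u = (\<Sum>p\<in>{..<m} \<times> {1..d}. u p * v p) + u (m, 0) * t"

lemma aug_functional_aug_sigma:
  "aug_functional m d v t (aug_sigma m d z) = inner_md m d (sigma z) v + t"
  unfolding aug_functional_def aug_sigma_def inner_md_def by auto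

lemma aug_functional_vanishes_on_span:
  assumes "u \<in> fun_space.span X" "\<And>x. x \<in> X \<Longrightarrow> aug_functional m d v t x = 0"
  shows "aug_functional m d v t u = 0"
  using assms(1)
proof (induction rule: fun_space.span_induct_alt)
  case base
  then show ?case by (simp add: aug_functional_def)
next
  case (step c x y)
  have "aug_functional m d v t (fun_scale c x + y) = c * aug_functional m d v t x + aug_functional m d v t y"
    by (simp add: aug_functional_def fun_scale_def algebra_simps sum.distrib sum_distrib_left)
  then show ?case
    using step assms(2) unfolding plus_fun_def by simp
qed

definition innovations :: "nat \<Rightarrow> nat \<Rightarrow> nat list list \<Rightarrow> nat set" where
  "innovations m d w =
     {j. j < length w \<and> aug_sigma m d (w!j) \<notin> fun_space.span (aug_sigma m d ` set (take j w))}"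

lemma card_innovations_le: "card (innovations m d w) \<le> m * d + 1"
proof -
  let ?R = "innovations m d w"
  let ?u = "\<lambda>j. aug_sigma m d (w!j)"
  have "?u j \<notin> fun_space.span (?u ` {l\<in>?R. l < j})" if j: "j \<in> ?R" for j
  proof -
    have "?u ` {l\<in>?R. l < j} \<subseteq> aug_sigma m d ` set (take j w)"
    proof
      fix y assume "y \<in> ?u ` {l\<in>?R. l < j}"
      then obtain l where "l < j" "y = ?u l" by auto
      moreover have "w!l \<in> set (take j w)"
        using \<open>l < j\<close> j by (auto simp: innovations_def in_set_conv_nth intro!: exI[of _ l])
      ultimately show "y \<in> aug_sigma m d ` set (take j w)" by auto
    qed
    then show ?thesis
      using j fun_space.span_mono unfolding innovations_def by blast
  qed
  moreover have "?R \<inter> {..<length w} = ?R" unfolding innovations_def by auto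
  ultimately have indep: "fun_space.independent (?u ` ?R)" and inj: "inj_on ?u ?R"
    using fun_space.independent_if_outside_span_of_predecessors[of ?R ?u "length w"] by auto
  let ?P = "{..<m} \<times> {1..d} \<union> {(m, 0)}"
  let ?B = "(\<lambda>p q. if q = p then (1::real) else 0) ` ?P"
  have "?u ` ?R \<subseteq> fun_space.span ?B"
    by (intro image_subsetI fun_space_span_indicators) (auto simp: aug_sigma_def)
  then have "card (?u ` ?R) \<le> card ?B"
    using fun_space.independent_span_bound[OF _ indep] by simp
  also have "\<dots> \<le> card ?P" by (rule card_image_le) simp
  also have "\<dots> \<le> m * d + 1" by (simp add: card_insert_if)
  finally show ?thesis using card_image[OF inj] by simp
qed

section \<open>Zero sets of affine functions of the encoding\<close>

lemma inner_md_sigma: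
  assumes "z \<in> attrs m d"
  shows "inner_md m d (sigma z) v = (\<Sum>i<m. v (i, z!i))"
proof -
  have "inner_md m d (sigma z) v = (\<Sum>i<m. \<Sum>j\<in>{1..d}. if j = z!i then v (i, j) else 0)"
    unfolding inner_md_def sigma_def sum.cartesian_product by (intro sum.cong refl) auto
  also have "\<dots> = (\<Sum>i<m. v (i, z!i))"
    using assms by (intro sum.cong refl) (auto simp: attrs_conv_nth)
  finally show ?thesis .
qed

lemma inner_md_diff:
  "inner_md m d u (\<lambda>p. a p - b p) = inner_md m d u a - inner_md m d u b"
  unfolding inner_md_def by (simp add: algebra_simps sum_subtractf)

lemma sum_nth_list_update:
  fixes f :: "nat \<Rightarrow> nat \<Rightarrow> 'a::ab_group_add"
  assumes "length z = m" "i < m"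
  shows "(\<Sum>j<m. f j (z[i := a] ! j)) = (\<Sum>j<m. f j (z!j)) - f i (z!i) + f i a"
proof -
  have "(\<Sum>j<m. f j (z[i := a] ! j)) = f i a + (\<Sum>j\<in>{..<m} - {i}. f j (z!j))"
    using assms by (simp add: sum.remove[of _ i])
  also have "(\<Sum>j\<in>{..<m} - {i}. f j (z!j)) = (\<Sum>j<m. f j (z!j)) - f i (z!i)"
    using assms by (simp add: sum_diff1)
  finally show ?thesis by (simp add: algebra_simps)
qed

definition zero_set :: "nat \<Rightarrow> nat \<Rightarrow> (nat \<times> nat \<Rightarrow> real) \<Rightarrow> real \<Rightarrow> nat list set" where
  "zero_set m d v t = {z\<in>attrs m d. inner_md m d (sigma z) v + t = 0}"

lemma finite_zero_set: "finite (zero_set m d v t)"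
  unfolding zero_set_def using finite_attrs by simp

lemma card_zero_set_fibre_le:
  assumes i: "i < m" and y: "y \<in> attrs m d" "y!i = 1"
  shows "card {z\<in>zero_set m d v t. z[i := 1] = y}
    \<le> card {a\<in>{1..d}. v (i, a) = v (i, 1) - (inner_md m d (sigma y) v + t)}"
proof -
  let ?c = "v (i, 1) - (inner_md m d (sigma y) v + t)"
  have "{z\<in>zero_set m d v t. z[i := 1] = y} \<subseteq> (\<lambda>a. y[i := a]) ` {a\<in>{1..d}. v (i, a) = ?c}"
  proof
    fix z assume z: "z \<in> {z\<in>zero_set m d v t. z[i := 1] = y}"
    then have z_attrs: "z \<in> attrs m d" and z_zero: "inner_md m d (sigma z) v + t = 0"
      by (auto simp: zero_set_def)
    define a where "a = z!i"
    have a: "a \<in> {1..d}" using z_attrs i by (auto simp: a_def attrs_conv_nth)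
    have z_eq: "z = y[i := a]" using z by (auto simp: a_def)
    have "inner_md m d (sigma z) v = (\<Sum>j<m. v (j, y!j)) - v (i, y!i) + v (i, a)"
      using inner_md_sigma[OF z_attrs] sum_nth_list_update[of y m i "\<lambda>j b. v (j, b)" a] y i
      unfolding z_eq by (simp add: attrs_def)
    then have "v (i, a) = ?c"
      using z_zero inner_md_sigma[OF y(1)] y(2) by simp
    then show "z \<in> (\<lambda>a. y[i := a]) ` {a\<in>{1..d}. v (i, a) = ?c}"
      using z_eq a by auto
  qed
  then have "card {z\<in>zero_set m d v t. z[i := 1] = y} \<le> card ((\<lambda>a. y[i := a]) ` {a\<in>{1..d}. v (i, a) = ?c})"
    by (intro card_mono) auto
  also have "\<dots> \<le> card {a\<in>{1..d}. v (i, a) = ?c}"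
    by (rule card_image_le) simp
  finally show ?thesis .
qed

lemma card_zero_set_le:
  assumes i: "i < m" and d: "d \<ge> 1" and L: "\<And>c. card {a\<in>{1..d}. v (i, a) = c} \<le> L"
  shows "card (zero_set m d v t) \<le> L * d ^ (m - 1)"
proof -
  let ?Z = "zero_set m d v t"
  let ?reset = "\<lambda>z::nat list. z[i := 1]"
  have reset_in: "?reset ` ?Z \<subseteq> {y\<in>attrs m d. y!i = 1}"
    using i d by (auto simp: zero_set_def attrs_conv_nth nth_list_update)
  have fibre: "card {z\<in>?Z. ?reset z = y} \<le> L" if "y \<in> ?reset ` ?Z" for y
  proof -
    have "y \<in> attrs m d" "y!i = 1" using that reset_in by auto
    from card_zero_set_fibre_le[OF i this] show ?thesis
      by (rule order_trans) (rule L)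
  qed
  have "card (?reset ` ?Z) \<le> card {y\<in>attrs m d. y!i = 1}"
    by (rule card_mono[OF _ reset_in]) (simp add: finite_attrs)
  also have "\<dots> = d ^ (m - 1)"
    using i d by (intro card_attrs_fixed_one) auto
  finally have card_image_reset: "card (?reset ` ?Z) \<le> d ^ (m - 1)" .
  have "card ?Z = card (\<Union>y\<in>?reset ` ?Z. {z\<in>?Z. ?reset z = y})"
    by (rule arg_cong[where f=card]) auto
  also have "\<dots> \<le> (\<Sum>y\<in>?reset ` ?Z. card {z\<in>?Z. ?reset z = y})"
    by (rule card_UN_le) (simp add: finite_zero_set)
  also have "\<dots> \<le> (\<Sum>y\<in>?reset ` ?Z. L)"
    by (rule sum_mono) (rule fibre)
  also have "\<dots> \<le> d ^ (m - 1) * L"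
    using card_image_reset by simp
  finally show ?thesis by (simp add: mult.commute)
qed

lemma finite_most_frequent_value:
  assumes "finite A" "A \<noteq> {}"
  obtains c where "\<And>c'. card {a\<in>A. f a = c'} \<le> card {a\<in>A. f a = c}"
proof -
  let ?freq = "\<lambda>c. card {a\<in>A. f a = c}"
  have "Max (?freq ` f ` A) \<in> ?freq ` f ` A"
    using assms by (intro Max_in) auto
  then obtain c where c: "Max (?freq ` f ` A) = ?freq c"
    by (rule imageE)
  have "?freq c' \<le> ?freq c" for c'
  proof (cases "c' \<in> f ` A")
    case True
    then have "?freq c' \<le> Max (?freq ` f ` A)"
      using assms(1) by (intro Max_ge) auto
    then show ?thesis using c by simp
  next
    case False
    then have "{a\<in>A. f a = c'} = {}" by auto
    then show ?thesis by (metis card.empty le0)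
  qed
  then show ?thesis by (rule that)
qed

lemma nearly_constant_if_large_zero_set:
  assumes i: "i < m" and d: "d \<ge> 1"
    and large: "real (card (zero_set m d v t)) > (1 - 1 / (4 * real m)) * real d ^ m"
  shows "\<exists>c. 4 * real m * real (card {a\<in>{1..d}. v (i, a) \<noteq> c}) < real d"
proof -
  let ?level = "\<lambda>c. card {a\<in>{1..d}. v (i, a) = c}"
  obtain c0 where most_frequent: "\<And>c. ?level c \<le> ?level c0"
    by (rule finite_most_frequent_value[of "{1..d}" "\<lambda>a. v (i, a)"]) (use d in auto)
  from most_frequent have "card (zero_set m d v t) \<le> ?level c0 * d ^ (m - 1)"
    by (rule card_zero_set_le[OF i d])
  then have "real (card (zero_set m d v t)) \<le> real (?level c0) * real d ^ (m - 1)"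
    by (metis of_nat_le_iff of_nat_mult of_nat_power)
  moreover have "real d ^ m = real d * real d ^ (m - 1)"
    using i by (cases m) auto
  ultimately have "((1 - 1 / (4 * real m)) * real d) * real d ^ (m - 1) < real (?level c0) * real d ^ (m - 1)"
    using large by (simp add: mult.assoc)
  then have level_large: "(1 - 1 / (4 * real m)) * real d < real (?level c0)"
    by (rule mult_right_less_imp_less) simp
  have "card ({a\<in>{1..d}. v (i, a) \<noteq> c0} \<union> {a\<in>{1..d}. v (i, a) = c0})
      = card {a\<in>{1..d}. v (i, a) \<noteq> c0} + ?level c0"
    by (rule card_Un_disjoint) auto
  moreover have "{a\<in>{1..d}. v (i, a) \<noteq> c0} \<union> {a\<in>{1..d}. v (i, a) = c0} = {1..d}"
    by auto
  ultimately have "card {a\<in>{1..d}. v (i, a) \<noteq> c0} + ?level c0 = d"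
    by simp
  then have "real (card {a\<in>{1..d}. v (i, a) \<noteq> c0} + ?level c0) = real d"
    by (simp only:)
  moreover have "real d - real d / (4 * real m) < real (?level c0)"
    using level_large by (simp add: algebra_simps)
  ultimately have "real (card {a\<in>{1..d}. v (i, a) \<noteq> c0}) < real d / (4 * real m)"
    by simp
  then have "4 * real m * real (card {a\<in>{1..d}. v (i, a) \<noteq> c0}) < real d"
    using i by (simp add: pos_less_divide_eq mult.commute)
  then show ?thesis ..
qed

text \<open>\<open>S\<close> consists of the pairs \<open>(i, a)\<close> at which \<open>v (i, a)\<close> differs from the most frequent
  value of \<open>v (i, -)\<close>.\<close>

lemma large_zero_set_decomposition:
  assumes m: "m \<ge> 1" and d: "d \<ge> 1"
    and large: "real (card (zero_set m d v t)) > (1 - 1 / (4 * real m)) * real d ^ m"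
  obtains S and f :: "nat \<Rightarrow> nat \<Rightarrow> real" and t0
  where "S \<subseteq> {..<m} \<times> {1..d}" "4 * card S \<le> d" "\<And>i a. (i, a) \<in> S \<Longrightarrow> f i a \<noteq> 0"
    "\<And>z. z \<in> attrs m d \<Longrightarrow>
       inner_md m d (sigma z) v + t = (\<Sum>i | i < m \<and> (i, z!i) \<in> S. f i (z!i)) + t0"
proof -
  have "\<forall>i\<in>{..<m}. \<exists>c. 4 * real m * real (card {a\<in>{1..d}. v (i, a) \<noteq> c}) < real d"
    using nearly_constant_if_large_zero_set[OF _ d large] by blast
  from bchoice[OF this] obtain c
    where c: "\<forall>i\<in>{..<m}. 4 * real m * real (card {a\<in>{1..d}. v (i, a) \<noteq> c i}) < real d"
    by blast
  define S where "S = Sigma {..<m} (\<lambda>i. {a\<in>{1..d}. v (i, a) \<noteq> c i})"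
  have "real m * (4 * real (card S)) = (\<Sum>i<m. 4 * real m * real (card {a\<in>{1..d}. v (i, a) \<noteq> c i}))"
    unfolding S_def by (simp add: card_SigmaI sum_distrib_left mult_ac)
  also have "\<dots> \<le> (\<Sum>i<m. real d)"
    using c by (intro sum_mono less_imp_le) simp
  also have "\<dots> = real m * real d"
    by simp
  finally have "4 * real (card S) \<le> real d"
    using m by simp
  then have "4 * card S \<le> d"
    by linarith
  moreover have "inner_md m d (sigma z) v + t =
      (\<Sum>i | i < m \<and> (i, z!i) \<in> S. v (i, z!i) - c i) + (t + (\<Sum>i<m. c i))" if z: "z \<in> attrs m d" for z
  proof -
    have "(\<Sum>i<m. v (i, z!i) - c i) = (\<Sum>i | i < m \<and> (i, z!i) \<in> S. v (i, z!i) - c i)"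
      using z by (intro sum.mono_neutral_right) (auto simp: S_def attrs_conv_nth)
    then show ?thesis
      unfolding inner_md_sigma[OF z] by (simp add: sum_subtractf)
  qed
  ultimately show ?thesis
    by (intro that[of S "\<lambda>i a. v (i, a) - c i"]) (auto simp: S_def)
qed

definition affinely_spanning :: "nat \<Rightarrow> nat \<Rightarrow> nat list set \<Rightarrow> bool" where
  "affinely_spanning m d T \<longleftrightarrow> (\<forall>v t. T \<subseteq> zero_set m d v t \<longrightarrow> zero_set m d v t = attrs m d)"

definition hits :: "nat \<Rightarrow> (nat \<times> nat) set \<Rightarrow> nat list \<Rightarrow> bool" where
  "hits m S z \<longleftrightarrow> (\<exists>i<m. (i, z!i) \<in> S)"

definition hits_once :: "nat \<Rightarrow> (nat \<times> nat) set \<Rightarrow> nat list \<Rightarrow> bool" where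
  "hits_once m S z \<longleftrightarrow> (\<exists>!i. i < m \<and> (i, z!i) \<in> S)"

definition in_small_zero_set :: "nat \<Rightarrow> nat \<Rightarrow> nat list set \<Rightarrow> bool" where
  "in_small_zero_set m d T \<longleftrightarrow>
     (\<exists>v t. T \<subseteq> zero_set m d v t \<and> real (card (zero_set m d v t)) \<le> (1 - 1 / (4 * real m)) * real d ^ m)"

lemma large_zero_set_cases:
  assumes m: "m \<ge> 1" and d: "d \<ge> 1"
    and large: "real (card (zero_set m d v t)) > (1 - 1 / (4 * real m)) * real d ^ m"
    and T: "T \<subseteq> zero_set m d v t" and proper: "zero_set m d v t \<noteq> attrs m d"
  obtains (all_hit) S where "S \<subseteq> {..<m} \<times> {1..d}" "4 * card S \<le> d" "\<forall>z\<in>T. hits m S z"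
  | (none_hit_once) S where "S \<subseteq> {..<m} \<times> {1..d}" "S \<noteq> {}" "4 * card S \<le> d"
      "\<forall>z\<in>T. \<not> hits_once m S z"
proof -
  obtain S f t0 where S: "S \<subseteq> {..<m} \<times> {1..d}" "4 * card S \<le> d"
    and f: "\<And>i a. (i, a) \<in> S \<Longrightarrow> f i a \<noteq> 0"
    and energy: "\<And>z. z \<in> attrs m d \<Longrightarrow>
       inner_md m d (sigma z) v + t = (\<Sum>i | i < m \<and> (i, z!i) \<in> S. f i (z!i)) + t0"
    using large_zero_set_decomposition[OF m d large] by blast
  have zero: "(\<Sum>i | i < m \<and> (i, z!i) \<in> S. f i (z!i)) + t0 = 0" if "z \<in> T" for z
    using that T energy by (auto simp: zero_set_def)
  show ?thesis
  proof (cases "t0 = 0")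
    case False
    have "hits m S z" if "z \<in> T" for z
    proof -
      have "(\<Sum>i | i < m \<and> (i, z!i) \<in> S. f i (z!i)) \<noteq> 0"
        using zero[OF that] False by linarith
      then have "{i. i < m \<and> (i, z!i) \<in> S} \<noteq> {}"
        by (intro notI) simp
      then show ?thesis unfolding hits_def by blast
    qed
    then show ?thesis using all_hit S by blast
  next
    case True
    obtain z0 where "z0 \<in> attrs m d" "z0 \<notin> zero_set m d v t"
      using proper T by (auto simp: zero_set_def)
    then have "(\<Sum>i | i < m \<and> (i, z0!i) \<in> S. f i (z0!i)) \<noteq> 0"
      using energy True by (auto simp: zero_set_def)
    then have "{i. i < m \<and> (i, z0!i) \<in> S} \<noteq> {}"
      by (intro notI) simp
    then have "S \<noteq> {}"
      by blast
    moreover have "\<not> hits_once m S z" if "z \<in> T" for z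
    proof
      assume "hits_once m S z"
      then obtain i where "{i. i < m \<and> (i, z!i) \<in> S} = {i}" "(i, z!i) \<in> S"
        unfolding hits_once_def by blast
      then show False using zero[OF that] True f by simp
    qed
    ultimately show ?thesis using none_hit_once S by blast
  qed
qed

lemma not_affinely_spanning_cases:
  assumes m: "m \<ge> 1" and d: "d \<ge> 1" and not_spanning: "\<not> affinely_spanning m d T"
  obtains (all_hit) S where "S \<subseteq> {..<m} \<times> {1..d}" "4 * card S \<le> d" "\<forall>z\<in>T. hits m S z"
  | (none_hit_once) S where "S \<subseteq> {..<m} \<times> {1..d}" "S \<noteq> {}" "4 * card S \<le> d"
      "\<forall>z\<in>T. \<not> hits_once m S z"
  | (small) "in_small_zero_set m d T"
proof -
  from not_spanning obtain v t where T: "T \<subseteq> zero_set m d v t" and proper: "zero_set m d v t \<noteq> attrs m d"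
    unfolding affinely_spanning_def by blast
  show ?thesis
  proof (cases "real (card (zero_set m d v t)) \<le> (1 - 1 / (4 * real m)) * real d ^ m")
    case True
    then show ?thesis using T small unfolding in_small_zero_set_def by blast
  next
    case False
    then have large: "real (card (zero_set m d v t)) > (1 - 1 / (4 * real m)) * real d ^ m"
      by simp
    show ?thesis
      using all_hit none_hit_once by (rule large_zero_set_cases[OF m d large T proper])
  qed
qed

section \<open>Non-spanning draws are rare\<close>

lemma real_card_UN_le:
  assumes "finite I"
  shows "real (card (\<Union>i\<in>I. A i)) \<le> (\<Sum>i\<in>I. real (card (A i)))"
  unfolding of_nat_sum[symmetric] of_nat_le_iff by (rule card_UN_le[OF assms])

lemma card_attrs_hits_le:
  assumes "S \<subseteq> {..<m} \<times> {1..d}"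
  shows "real (card {z\<in>attrs m d. hits m S z}) \<le> real (card S) * real d ^ (m - 1)"
proof -
  have fin: "finite S" using assms finite_subset by blast
  have "{z\<in>attrs m d. hits m S z} = (\<Union>p\<in>S. {z\<in>attrs m d. z!(fst p) = snd p})"
    using assms unfolding hits_def by force
  then have "real (card {z\<in>attrs m d. hits m S z}) \<le> (\<Sum>p\<in>S. real (card {z\<in>attrs m d. z!(fst p) = snd p}))"
    using real_card_UN_le[OF fin] by simp
  also have "\<dots> = (\<Sum>p\<in>S. real d ^ (m - 1))"
    using assms by (intro sum.cong refl) (auto simp: card_attrs_fixed_one)
  finally show ?thesis by simp
qed

lemma card_attrs_hits_only_at_ge:
  assumes S: "S \<subseteq> {..<m} \<times> {1..d}" and ia: "(i, a) \<in> S" and d: "d \<ge> 1"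
  shows "real (card {z\<in>attrs m d. z!i = a \<and> (\<forall>j<m. j \<noteq> i \<longrightarrow> (j, z!j) \<notin> S)})
    \<ge> real d ^ m / real d - real (card S) * real d ^ m / real d ^ 2"
proof -
  have fin: "finite S" using S finite_subset by blast
  have i: "i < m" "a \<in> {1..d}" using ia S by auto
  let ?E = "{z\<in>attrs m d. z!i = a \<and> (\<forall>j<m. j \<noteq> i \<longrightarrow> (j, z!j) \<notin> S)}"
  let ?S' = "{q\<in>S. fst q \<noteq> i}"
  let ?both = "\<lambda>q. {z\<in>attrs m d. z!i = a \<and> z!(fst q) = snd q}"
  have "{z\<in>attrs m d. z!i = a} \<subseteq> ?E \<union> (\<Union>q\<in>?S'. ?both q)"
  proof
    fix z assume z: "z \<in> {z\<in>attrs m d. z!i = a}"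
    show "z \<in> ?E \<union> (\<Union>q\<in>?S'. ?both q)"
    proof (cases "\<exists>j<m. j \<noteq> i \<and> (j, z!j) \<in> S")
      case True
      then obtain j where "j \<noteq> i" "(j, z!j) \<in> S" by blast
      then show ?thesis using z by (intro UnI2 UN_I[of "(j, z!j)"]) auto
    next
      case False
      then show ?thesis using z by auto
    qed
  qed
  then have "card {z\<in>attrs m d. z!i = a} \<le> card (?E \<union> (\<Union>q\<in>?S'. ?both q))"
    by (rule card_mono[rotated]) (use fin in \<open>auto simp: finite_attrs\<close>)
  also have "\<dots> \<le> card ?E + card (\<Union>q\<in>?S'. ?both q)"
    by (rule card_Un_le)
  finally have "real (card {z\<in>attrs m d. z!i = a}) \<le> real (card ?E) + real (card (\<Union>q\<in>?S'. ?both q))"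
    by linarith
  also have "real (card (\<Union>q\<in>?S'. ?both q)) \<le> (\<Sum>q\<in>?S'. real (card (?both q)))"
    by (rule real_card_UN_le) (use fin in simp)
  also have "\<dots> = (\<Sum>q\<in>?S'. real d ^ m / real d ^ 2)"
  proof (intro sum.cong refl)
    fix q assume "q \<in> ?S'"
    then show "real (card (?both q)) = real d ^ m / real d ^ 2"
      using S i by (intro card_attrs_fixed_two) auto
  qed
  also have "\<dots> = real (card ?S') * (real d ^ m / real d ^ 2)"
    by simp
  also have "\<dots> \<le> real (card S) * (real d ^ m / real d ^ 2)"
    by (intro mult_right_mono) (use fin in \<open>auto intro: card_mono\<close>)
  finally have "real (card {z\<in>attrs m d. z!i = a}) \<le> real (card ?E) + real (card S) * real d ^ m / real d ^ 2"
    by simp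
  moreover have "real (card {z\<in>attrs m d. z!i = a}) = real d ^ m / real d"
    using card_attrs_fixed_one[OF i] i d by (cases m) auto
  ultimately show ?thesis by linarith
qed

lemma card_attrs_hits_once_ge:
  assumes S: "S \<subseteq> {..<m} \<times> {1..d}" and d: "d \<ge> 1"
  shows "real (card {z\<in>attrs m d. hits_once m S z})
     \<ge> real (card S) * (real d ^ m / real d - real (card S) * real d ^ m / real d ^ 2)"
proof -
  have fin: "finite S" using S finite_subset by blast
  define E where "E p = {z\<in>attrs m d. z!(fst p) = snd p \<and> (\<forall>j<m. j \<noteq> fst p \<longrightarrow> (j, z!j) \<notin> S)}" for p
  have E_hits_once: "(\<Union>p\<in>S. E p) \<subseteq> {z\<in>attrs m d. hits_once m S z}"
  proof (intro UN_least subsetI)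
    fix p z assume "p \<in> S" "z \<in> E p"
    then show "z \<in> {z\<in>attrs m d. hits_once m S z}"
      using S unfolding E_def hits_once_def by (intro CollectI conjI ex1I[of _ "fst p"]) auto
  qed
  have disjoint: "E p \<inter> E q = {}" if pq: "p \<in> S" "q \<in> S" "p \<noteq> q" for p q
  proof (rule ccontr)
    assume "E p \<inter> E q \<noteq> {}"
    then obtain z where "z!(fst p) = snd p" "z!(fst q) = snd q"
      "fst q < m \<Longrightarrow> fst q \<noteq> fst p \<Longrightarrow> (fst q, z!(fst q)) \<notin> S"
      unfolding E_def by blast
    moreover have "fst q < m" using pq S by auto
    ultimately show False using pq by (cases p, cases q) auto
  qed
  have "real d ^ m / real d - real (card S) * real d ^ m / real d ^ 2 \<le> real (card (E p))" if "p \<in> S" for p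
    using card_attrs_hits_only_at_ge[OF S _ d, of "fst p" "snd p"] that unfolding E_def by simp
  then have "real (card S) * (real d ^ m / real d - real (card S) * real d ^ m / real d ^ 2)
      \<le> (\<Sum>p\<in>S. real (card (E p)))"
    using sum_mono[of S "\<lambda>_. real d ^ m / real d - real (card S) * real d ^ m / real d ^ 2"] by simp
  also have "\<dots> = real (card (\<Union>p\<in>S. E p))"
    by (subst card_UN_disjoint) (use fin disjoint in \<open>auto simp: E_def finite_attrs\<close>)
  also have "\<dots> \<le> real (card {z\<in>attrs m d. hits_once m S z})"
    using E_hits_once by (simp add: card_mono finite_attrs)
  finally show ?thesis .
qed

lemma card_attrs_not_hits_once_le:
  assumes S: "S \<subseteq> {..<m} \<times> {1..d}" "4 * card S \<le> d" and d: "d \<ge> 1"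
  shows "real (card {z\<in>attrs m d. \<not> hits_once m S z}) \<le> real d ^ m * (1 - 3 * real (card S) / (4 * real d))"
proof -
  let ?M = "real d ^ m" and ?k = "real (card S)"
  have d_pos: "real d > 0" using d by simp
  have "card {z\<in>attrs m d. hits_once m S z} \<le> card (attrs m d)"
    by (rule card_mono) (auto simp: finite_attrs)
  moreover have "card {z\<in>attrs m d. \<not> hits_once m S z} = card (attrs m d - {z\<in>attrs m d. hits_once m S z})"
    by (rule arg_cong[where f=card]) auto
  ultimately have "real (card {z\<in>attrs m d. \<not> hits_once m S z}) = ?M - real (card {z\<in>attrs m d. hits_once m S z})"
    by (simp add: card_Diff_subset finite_attrs card_attrs of_nat_diff)
  also have "\<dots> \<le> ?M - ?k * (?M / real d - ?k * ?M / real d ^ 2)"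
    using card_attrs_hits_once_ge[OF S(1) d] by linarith
  also have "\<dots> = ?M * (1 - ?k / real d + ?k * ?k / real d ^ 2)"
    using d_pos by (simp add: field_simps power2_eq_square)
  also have "\<dots> \<le> ?M * (1 - 3 * ?k / (4 * real d))"
  proof (rule mult_left_mono)
    have "?k * (4 * ?k) \<le> ?k * real d"
      using S(2) by (intro mult_left_mono) auto
    then have "?k * ?k / real d ^ 2 \<le> ?k / (4 * real d)"
      using d_pos by (simp add: field_simps power2_eq_square)
    then show "1 - ?k / real d + ?k * ?k / real d ^ 2 \<le> 1 - 3 * ?k / (4 * real d)"
      using d_pos by (simp add: field_simps)
  qed simp
  finally show ?thesis .
qed

lemma power_one_minus_le_powr:
  assumes d: "d \<ge> 2" and k: "4 * k \<le> d" and s: "real s \<ge> 2 * real d * ln (real d)"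
  shows "(1 - 3 * real k / (4 * real d)) ^ s \<le> (real d powr (-3/2)) ^ k"
proof -
  have d_pos: "real d > 0" using d by simp
  have "0 \<le> 1 - 3 * real k / (4 * real d)"
    using k d_pos by (simp add: field_simps)
  then have "(1 - 3 * real k / (4 * real d)) ^ s \<le> exp (- (3 * real k / (4 * real d))) ^ s"
    by (intro power_mono) (use exp_ge_add_one_self[of "- (3 * real k / (4 * real d))"] in auto)
  also have "\<dots> = exp (- (3 * real k / (4 * real d)) * real s)"
    by (simp add: exp_of_nat_mult[symmetric] mult.commute)
  also have "\<dots> \<le> exp (- (3 * real k / (4 * real d)) * (2 * real d * ln (real d)))"
    using mult_left_mono[OF s, of "3 * real k / (4 * real d)"] d_pos by simp
  also have "\<dots> = exp (ln (real d) * (-3/2)) ^ k"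
    using d_pos by (simp add: exp_of_nat_mult[symmetric] field_simps)
  also have "exp (ln (real d) * (-3/2)) = real d powr (-3/2)"
    using d_pos by (simp add: powr_def)
  finally show ?thesis .
qed

lemma card_draws_all_hit_le:
  assumes "S \<subseteq> {..<m} \<times> {1..d}" "4 * card S \<le> d" "m \<ge> 1"
  shows "real (card {w\<in>draws m d s. \<forall>z\<in>set w. hits m S z}) \<le> (real d ^ m / 4) ^ s"
proof -
  have "real (card {z\<in>attrs m d. hits m S z}) \<le> real (card S) * real d ^ (m - 1)"
    by (rule card_attrs_hits_le[OF assms(1)])
  also have "\<dots> \<le> (real d / 4) * real d ^ (m - 1)"
    using assms(2) by (intro mult_right_mono) auto
  also have "\<dots> = real d ^ m / 4"
    using assms(3) by (cases m) auto
  finally have "real (card {z\<in>attrs m d. hits m S z}) ^ s \<le> (real d ^ m / 4) ^ s"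
    by (intro power_mono) auto
  then show ?thesis
    by (simp add: card_draws_all)
qed

lemma card_draws_never_hit_once_le:
  assumes S: "S \<subseteq> {..<m} \<times> {1..d}" "4 * card S \<le> d" and d: "d \<ge> 2"
    and s: "real s \<ge> 2 * real d * ln (real d)"
  shows "real (card {w\<in>draws m d s. \<forall>z\<in>set w. \<not> hits_once m S z})
    \<le> (real d ^ m) ^ s * (real d powr (-3/2)) ^ card S"
proof -
  have "real (card {w\<in>draws m d s. \<forall>z\<in>set w. \<not> hits_once m S z})
      = real (card {z\<in>attrs m d. \<not> hits_once m S z}) ^ s"
    by (simp add: card_draws_all)
  also have "\<dots> \<le> (real d ^ m * (1 - 3 * real (card S) / (4 * real d))) ^ s"
    using d by (intro power_mono card_attrs_not_hits_once_le[OF S]) auto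
  also have "\<dots> = (real d ^ m) ^ s * (1 - 3 * real (card S) / (4 * real d)) ^ s"
    by (simp add: power_mult_distrib)
  also have "\<dots> \<le> (real d ^ m) ^ s * (real d powr (-3/2)) ^ card S"
    by (intro mult_left_mono power_one_minus_le_powr[OF d S(2) s]) simp
  finally show ?thesis .
qed

definition small_pair_sets :: "nat \<Rightarrow> nat \<Rightarrow> (nat \<times> nat) set set" where
  "small_pair_sets m d = {S. S \<subseteq> {..<m} \<times> {1..d} \<and> 4 * card S \<le> d}"

lemma finite_small_pair_sets: "finite (small_pair_sets m d)"
  by (rule finite_subset[of _ "Pow ({..<m} \<times> {1..d})"]) (auto simp: small_pair_sets_def)

lemma card_draws_all_hit_some_le:
  assumes m: "m \<ge> 1" and s: "s \<ge> m * d"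
  shows "real (card (\<Union>S\<in>small_pair_sets m d. {w\<in>draws m d s. \<forall>z\<in>set w. hits m S z}))
    \<le> (real d ^ m) ^ s * (1/2) ^ d"
proof -
  let ?I = "{..<m} \<times> {1..d}"
  let ?M = "real d ^ m"
  have "real (card (\<Union>S\<in>small_pair_sets m d. {w\<in>draws m d s. \<forall>z\<in>set w. hits m S z}))
      \<le> (\<Sum>S\<in>small_pair_sets m d. real (card {w\<in>draws m d s. \<forall>z\<in>set w. hits m S z}))"
    by (rule real_card_UN_le[OF finite_small_pair_sets])
  also have "\<dots> \<le> (\<Sum>S\<in>small_pair_sets m d. (?M / 4) ^ s)"
    by (intro sum_mono card_draws_all_hit_le) (use m in \<open>auto simp: small_pair_sets_def\<close>)
  also have "\<dots> \<le> real (card (Pow ?I)) * (?M / 4) ^ s"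
    by (auto intro!: mult_right_mono card_mono simp: small_pair_sets_def)
  also have "\<dots> = ?M ^ s * (2 ^ (m * d) / 4 ^ s)"
    by (simp add: card_Pow card_cartesian_product power_divide)
  also have "2 ^ (m * d) / 4 ^ s \<le> (2::real) ^ (m * d) / 4 ^ (m * d)"
    using s by (intro divide_left_mono power_increasing) auto
  also have "\<dots> = (1/2) ^ (m * d)"
    by (simp add: power_divide[symmetric])
  also have "\<dots> \<le> (1/2) ^ d"
    using m by (intro power_decreasing) auto
  finally show ?thesis by (simp add: mult_left_mono)
qed

lemma one_plus_powr_power_le_exp:
  assumes "d > 0"
  shows "(1 + real d powr (-3/2)) ^ (m * d) \<le> exp (real m * real d powr (-1/2))"
proof -
  have "(1 + real d powr (-3/2)) ^ (m * d) \<le> exp (real d powr (-3/2)) ^ (m * d)"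
    by (intro power_mono) (use exp_ge_add_one_self[of "real d powr (-3/2)"] in auto)
  also have "\<dots> = exp (real m * (real d powr 1 * real d powr (-3/2)))"
    using assms by (simp add: exp_of_nat_mult[symmetric] mult.assoc)
  also have "real d powr 1 * real d powr (-3/2) = real d powr (-1/2)"
    by (subst powr_add[symmetric]) simp
  finally show ?thesis .
qed

lemma card_draws_never_hit_once_some_le:
  assumes d: "d \<ge> 2" and s: "real s \<ge> 2 * real d * ln (real d)"
  shows "real (card (\<Union>S\<in>small_pair_sets m d - {{}}. {w\<in>draws m d s. \<forall>z\<in>set w. \<not> hits_once m S z}))
    \<le> (real d ^ m) ^ s * (exp (real m * real d powr (-1/2)) - 1)"
proof -
  let ?I = "{..<m} \<times> {1..d}"
  let ?M = "real d ^ m"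
  let ?x = "real d powr (-3/2)"
  have "real (card (\<Union>S\<in>small_pair_sets m d - {{}}. {w\<in>draws m d s. \<forall>z\<in>set w. \<not> hits_once m S z}))
      \<le> (\<Sum>S\<in>small_pair_sets m d - {{}}. real (card {w\<in>draws m d s. \<forall>z\<in>set w. \<not> hits_once m S z}))"
    by (rule real_card_UN_le) (simp add: finite_small_pair_sets)
  also have "\<dots> \<le> (\<Sum>S\<in>small_pair_sets m d - {{}}. ?M ^ s * ?x ^ card S)"
    by (intro sum_mono card_draws_never_hit_once_le) (use d s in \<open>auto simp: small_pair_sets_def\<close>)
  also have "\<dots> \<le> (\<Sum>S\<in>Pow ?I - {{}}. ?M ^ s * ?x ^ card S)"
    by (intro sum_mono2) (auto simp: small_pair_sets_def)
  also have "\<dots> = ?M ^ s * ((\<Sum>S\<in>Pow ?I. ?x ^ card S * 1 ^ (card ?I - card S)) - 1)"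
    by (simp add: sum_distrib_left sum_diff1 right_diff_distrib)
  also have "(\<Sum>S\<in>Pow ?I. ?x ^ card S * 1 ^ (card ?I - card S)) = (?x + 1) ^ (m * d)"
    by (subst sum_Pow_power_card) (auto simp: card_cartesian_product)
  also have "(?x + 1) ^ (m * d) \<le> exp (real m * real d powr (-1/2))"
    using one_plus_powr_power_le_exp[of d m] d by (simp add: add.commute)
  finally show ?thesis by (simp add: mult_left_mono)
qed

text \<open>Possible values of the \<open>j\<close>-th draw after the draws \<open>p\<close>: anything at the positions \<open>R\<close>,
  elsewhere only points of the span of \<open>p\<close>, which are few when \<open>p\<close> lies in a small zero set.\<close>

definition innovation_candidates :: "nat \<Rightarrow> nat \<Rightarrow> nat set \<Rightarrow> nat \<Rightarrow> nat list list \<Rightarrow> nat list set" where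
  "innovation_candidates m d R j p =
     (if j \<in> R then attrs m d
      else if in_small_zero_set m d (set p)
        then {z\<in>attrs m d. aug_sigma m d z \<in> fun_space.span (aug_sigma m d ` set p)}
      else {})"

definition draws_innovating_at :: "nat \<Rightarrow> nat \<Rightarrow> nat \<Rightarrow> nat set \<Rightarrow> nat list list set" where
  "draws_innovating_at m d s R =
     {w. length w = s \<and> (\<forall>j<s. w!j \<in> innovation_candidates m d R j (take j w))}"

lemma span_aug_sigma_subset_zero_set:
  assumes "set p \<subseteq> zero_set m d v t"
  shows "{z\<in>attrs m d. aug_sigma m d z \<in> fun_space.span (aug_sigma m d ` set p)} \<subseteq> zero_set m d v t"
proof
  fix z assume z: "z \<in> {z\<in>attrs m d. aug_sigma m d z \<in> fun_space.span (aug_sigma m d ` set p)}"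
  have "aug_functional m d v t x = 0" if "x \<in> aug_sigma m d ` set p" for x
    using that assms by (auto simp: aug_functional_aug_sigma zero_set_def)
  then have "aug_functional m d v t (aug_sigma m d z) = 0"
    using z aug_functional_vanishes_on_span by blast
  then show "z \<in> zero_set m d v t"
    using z by (simp add: aug_functional_aug_sigma zero_set_def)
qed

lemma card_innovation_candidates_le:
  assumes "m \<ge> 1"
  shows "real (card (innovation_candidates m d R j p))
    \<le> (if j \<in> R then real d ^ m else (1 - 1 / (4 * real m)) * real d ^ m)"
proof (cases "j \<notin> R \<and> in_small_zero_set m d (set p)")
  case True
  then obtain v t where vt: "set p \<subseteq> zero_set m d v t"
    "real (card (zero_set m d v t)) \<le> (1 - 1 / (4 * real m)) * real d ^ m"
    unfolding in_small_zero_set_def by blast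
  have "innovation_candidates m d R j p \<subseteq> zero_set m d v t"
    using True span_aug_sigma_subset_zero_set[OF vt(1)] by (simp add: innovation_candidates_def)
  then have "card (innovation_candidates m d R j p) \<le> card (zero_set m d v t)"
    by (rule card_mono[OF finite_zero_set])
  then have "real (card (innovation_candidates m d R j p)) \<le> real (card (zero_set m d v t))"
    by simp
  with True vt(2) show ?thesis
    by simp
next
  case False
  have "0 \<le> (1 - 1 / (4 * real m)) * real d ^ m"
    using assms by (intro mult_nonneg_nonneg) (auto simp: field_simps)
  with False show ?thesis
    by (auto simp: innovation_candidates_def card_attrs)
qed

lemma card_draws_innovating_at_le:
  assumes m: "m \<ge> 1" and R: "R \<subseteq> {..<s}"
  shows "real (card (draws_innovating_at m d s R)) \<le> (real d ^ m) ^ s * (1 - 1 / (4 * real m)) ^ (s - card R)"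
proof -
  let ?q = "1 - 1 / (4 * real m)"
  let ?M = "real d ^ m"
  have candidates: "innovation_candidates m d R j p \<subseteq> attrs m d" for j p
    by (auto simp: innovation_candidates_def)
  have "real (card (draws_innovating_at m d s R)) \<le> (\<Prod>j<s. if j \<in> R then ?M else ?q * ?M)"
    unfolding draws_innovating_at_def
    by (rule card_adaptive_lists_le[OF finite_attrs candidates card_innovation_candidates_le[OF m]])
  also have "\<dots> = (\<Prod>j\<in>R. ?M) * (\<Prod>j\<in>{..<s} - R. ?q * ?M)"
    using R by (simp add: prod.If_cases Int_absorb1 Diff_eq)
  also have "\<dots> = ?M ^ (card R + (s - card R)) * ?q ^ (s - card R)"
    using R by (simp add: card_Diff_subset finite_subset power_mult_distrib power_add)
  also have "card R + (s - card R) = s"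
    using card_mono[OF _ R] by simp
  finally show ?thesis .
qed

lemma draws_in_small_zero_set_innovating:
  assumes w: "w \<in> draws m d s" and small: "in_small_zero_set m d (set w)"
  shows "w \<in> (\<Union>R\<in>{R. R \<subseteq> {..<s} \<and> card R \<le> m * d + 1}. draws_innovating_at m d s R)"
proof -
  have len: "length w = s" and w_attrs: "set w \<subseteq> attrs m d"
    using w by (auto simp: draws_def)
  have "w!j \<in> innovation_candidates m d (innovations m d w) j (take j w)" if j: "j < s" for j
  proof (cases "j \<in> innovations m d w")
    case True
    then show ?thesis using j len w_attrs by (auto simp: innovation_candidates_def)
  next
    case False
    then have "aug_sigma m d (w!j) \<in> fun_space.span (aug_sigma m d ` set (take j w))"
      using j len by (simp add: innovations_def)
    moreover have "in_small_zero_set m d (set (take j w))"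
      using small set_take_subset[of j w] unfolding in_small_zero_set_def by blast
    moreover have "w!j \<in> attrs m d" using j len w_attrs by auto
    ultimately show ?thesis using False by (simp add: innovation_candidates_def)
  qed
  then have "w \<in> draws_innovating_at m d s (innovations m d w)"
    using len by (simp add: draws_innovating_at_def)
  moreover have "innovations m d w \<subseteq> {..<s}"
    using len by (auto simp: innovations_def)
  ultimately show ?thesis
    using card_innovations_le by blast
qed

lemma innovation_bound_le_exp:
  assumes m: "m \<ge> 1" and s: "real s \<ge> 2 * real d * ln (real d)"
  shows "(8 * real m) ^ (m * d + 1) * (1 - 1 / (8 * real m)) ^ s
    \<le> exp ((real m * real d + 1) * ln (8 * real m) - real d * ln (real d) / (4 * real m))"
proof -
  have m_pos: "real m > 0" using m by simp
  have "(8 * real m) ^ (m * d + 1) = exp (ln ((8 * real m) ^ (m * d + 1)))"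
    using m_pos by simp
  also have "ln ((8 * real m) ^ (m * d + 1)) = real (m * d + 1) * ln (8 * real m)"
    by (rule ln_realpow)
  also have "real (m * d + 1) = real m * real d + 1"
    by simp
  finally have "(8 * real m) ^ (m * d + 1) = exp ((real m * real d + 1) * ln (8 * real m))" .
  moreover have "(1 - 1 / (8 * real m)) ^ s \<le> exp (- (real d * ln (real d) / (4 * real m)))"
  proof -
    have "(1 - 1 / (8 * real m)) ^ s \<le> exp (- (1 / (8 * real m))) ^ s"
      using m by (intro power_mono) (use exp_ge_add_one_self[of "- (1 / (8 * real m))"] in \<open>auto simp: field_simps\<close>)
    also have "\<dots> = exp (- (real s / (8 * real m)))"
      by (simp add: exp_of_nat_mult[symmetric])
    also have "\<dots> \<le> exp (- (real d * ln (real d) / (4 * real m)))"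
      using s m_pos by (simp add: field_simps)
    finally show ?thesis .
  qed
  ultimately have "(8 * real m) ^ (m * d + 1) * (1 - 1 / (8 * real m)) ^ s
      \<le> exp ((real m * real d + 1) * ln (8 * real m)) * exp (- (real d * ln (real d) / (4 * real m)))"
    by (simp add: mult_left_mono)
  then show ?thesis
    by (simp add: exp_add[symmetric])
qed

lemma draws_innovating_at_subset_draws: "draws_innovating_at m d s R \<subseteq> draws m d s"
  by (auto simp: draws_innovating_at_def draws_def innovation_candidates_def set_conv_nth
      split: if_splits)

lemma card_draws_in_small_zero_set_le:
  assumes m: "m \<ge> 1" and s: "real s \<ge> 2 * real d * ln (real d)"
  shows "real (card {w\<in>draws m d s. in_small_zero_set m d (set w)})
    \<le> (real d ^ m) ^ s * exp ((real m * real d + 1) * ln (8 * real m) - real d * ln (real d) / (4 * real m))"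
proof -
  let ?N = "m * d + 1"
  let ?RR = "{R. R \<subseteq> {..<s} \<and> card R \<le> ?N}"
  let ?M = "real d ^ m"
  let ?q = "1 - 1 / (4 * real m)"
  let ?l = "8 * real m"
  have l: "?l \<ge> 1" and q: "?q \<ge> 0" using m by (auto simp: field_simps)
  have fin: "finite ?RR" by (rule finite_subset[of _ "Pow {..<s}"]) auto
  have "{w\<in>draws m d s. in_small_zero_set m d (set w)} \<subseteq> (\<Union>R\<in>?RR. draws_innovating_at m d s R)"
    using draws_in_small_zero_set_innovating by blast
  then have "real (card {w\<in>draws m d s. in_small_zero_set m d (set w)})
      \<le> real (card (\<Union>R\<in>?RR. draws_innovating_at m d s R))"
    using finite_subset[OF draws_innovating_at_subset_draws finite_draws] fin
    by (intro of_nat_mono card_mono) auto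
  also have "\<dots> \<le> (\<Sum>R\<in>?RR. real (card (draws_innovating_at m d s R)))"
    by (rule real_card_UN_le[OF fin])
  \<comment> \<open>the weight \<open>(8m)^(md+1) / (8m)^|R| \<ge> 1\<close> turns the sum over \<open>R\<close> into a binomial expansion\<close>
  also have "\<dots> \<le> (\<Sum>R\<in>?RR. ?M ^ s * (?l ^ ?N * ((1 / ?l) ^ card R * ?q ^ (s - card R))))"
  proof (rule sum_mono)
    fix R assume R: "R \<in> ?RR"
    have "1 \<le> ?l ^ (?N - card R)"
      using l by (rule one_le_power)
    also have "\<dots> = ?l ^ ?N * (1 / ?l) ^ card R"
      using R l by (simp add: power_diff power_one_over)
    finally have "?q ^ (s - card R) \<le> (?l ^ ?N * (1 / ?l) ^ card R) * ?q ^ (s - card R)"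
      using q by (simp add: mult_le_cancel_right1)
    then have "?M ^ s * ?q ^ (s - card R) \<le> ?M ^ s * (?l ^ ?N * ((1 / ?l) ^ card R * ?q ^ (s - card R)))"
      by (simp add: mult_left_mono mult.assoc)
    then show "real (card (draws_innovating_at m d s R)) \<le> ?M ^ s * (?l ^ ?N * ((1 / ?l) ^ card R * ?q ^ (s - card R)))"
      using card_draws_innovating_at_le[OF m, of R s d] R by simp
  qed
  also have "\<dots> \<le> (\<Sum>R\<in>Pow {..<s}. ?M ^ s * (?l ^ ?N * ((1 / ?l) ^ card R * ?q ^ (s - card R))))"
    by (rule sum_mono2) (use q l in auto)
  also have "\<dots> = ?M ^ s * (?l ^ ?N * (1 / ?l + ?q) ^ s)"
  proof -
    have binom: "(\<Sum>R\<in>Pow {..<s}. (1 / ?l) ^ card R * ?q ^ (s - card R)) = (1 / ?l + ?q) ^ s"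
      using sum_Pow_power_card[of "{..<s}" "1 / ?l" ?q] by simp
    show ?thesis
      by (simp only: sum_distrib_left[symmetric] binom)
  qed
  also have "1 / ?l + ?q = 1 - 1 / (8 * real m)"
    using m by (simp add: field_simps)
  also have "?l ^ ?N * (1 - 1 / (8 * real m)) ^ s
      \<le> exp ((real m * real d + 1) * ln (8 * real m) - real d * ln (real d) / (4 * real m))"
    by (rule innovation_bound_le_exp[OF m s])
  finally show ?thesis by (simp add: mult_left_mono)
qed

definition bad_draws :: "nat \<Rightarrow> nat \<Rightarrow> nat \<Rightarrow> nat list list set" where
  "bad_draws m d s = {w\<in>draws m d s. \<not> affinely_spanning m d (set w)}"

definition nonspanning_bound :: "nat \<Rightarrow> nat \<Rightarrow> real" where
  "nonspanning_bound m d = (1/2) ^ d + (exp (real m * real d powr (-1/2)) - 1)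
     + exp ((real m * real d + 1) * ln (8 * real m) - real d * ln (real d) / (4 * real m))"

lemma card_bad_draws_le:
  assumes m: "m \<ge> 1" and d: "d \<ge> 2" and s: "s \<ge> m * d" "real s \<ge> 2 * real d * ln (real d)"
  shows "real (card (bad_draws m d s)) \<le> (real d ^ m) ^ s * nonspanning_bound m d"
proof -
  let ?A = "\<Union>S\<in>small_pair_sets m d. {w\<in>draws m d s. \<forall>z\<in>set w. hits m S z}"
  let ?B = "\<Union>S\<in>small_pair_sets m d - {{}}. {w\<in>draws m d s. \<forall>z\<in>set w. \<not> hits_once m S z}"
  let ?C = "{w\<in>draws m d s. in_small_zero_set m d (set w)}"
  have "bad_draws m d s \<subseteq> ?A \<union> ?B \<union> ?C"
  proof
    fix w assume "w \<in> bad_draws m d s"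
    then have w: "w \<in> draws m d s" and not_spanning: "\<not> affinely_spanning m d (set w)"
      by (auto simp: bad_draws_def)
    from d have "d \<ge> 1" by simp
    then show "w \<in> ?A \<union> ?B \<union> ?C"
      by (cases rule: not_affinely_spanning_cases[OF m _ not_spanning])
         (use w in \<open>auto simp: small_pair_sets_def\<close>)
  qed
  moreover have "finite (?A \<union> ?B \<union> ?C)"
    by (rule finite_subset[OF _ finite_draws]) auto
  ultimately have "card (bad_draws m d s) \<le> card (?A \<union> ?B \<union> ?C)"
    by (intro card_mono)
  also have "\<dots> \<le> card ?A + card ?B + card ?C"
    using card_Un_le[of "?A \<union> ?B" ?C] card_Un_le[of ?A ?B] by linarith
  finally have "real (card (bad_draws m d s)) \<le> real (card ?A) + real (card ?B) + real (card ?C)"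
    by linarith
  also have "\<dots> \<le> (real d ^ m) ^ s * (1/2) ^ d + (real d ^ m) ^ s * (exp (real m * real d powr (-1/2)) - 1)
      + (real d ^ m) ^ s * exp ((real m * real d + 1) * ln (8 * real m) - real d * ln (real d) / (4 * real m))"
    using card_draws_all_hit_some_le[OF m s(1)] card_draws_never_hit_once_some_le[OF d s(2)]
      card_draws_in_small_zero_set_le[OF m s(2)]
    by (intro add_mono)
  also have "\<dots> = (real d ^ m) ^ s * nonspanning_bound m d"
    by (simp add: nonspanning_bound_def algebra_simps)
  finally show ?thesis .
qed

lemma nonspanning_bound_tendsto_0:
  assumes "m \<ge> 1"
  shows "nonspanning_bound m \<longlonglongrightarrow> 0"
proof -
  have "((\<lambda>x::real. (1/2) powr x + (exp (real m * x powr (-1/2)) - 1)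
      + exp ((real m * x + 1) * ln (8 * real m) - x * ln x / (4 * real m))) \<longlongrightarrow> 0) at_top"
    using assms by real_asymp
  then have "((\<lambda>d. (1/2) powr real d + (exp (real m * real d powr (-1/2)) - 1)
      + exp ((real m * real d + 1) * ln (8 * real m) - real d * ln (real d) / (4 * real m))) \<longlongrightarrow> 0) sequentially"
    by (rule filterlim_compose[OF _ filterlim_real_sequentially])
  then show ?thesis
    by (simp add: nonspanning_bound_def[abs_def] powr_realpow)
qed

lemma bad_draws_fraction_le:
  assumes m: "m \<ge> 1" and d: "d \<ge> 2" and s: "real s \<ge> 2 * (real m * real d + real d * ln (real d))"
  shows "real (card (bad_draws m d s)) / real (card (draws m d s)) \<le> nonspanning_bound m d"
proof -
  have "0 \<le> real d * ln (real d)" "0 \<le> real m * real d"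
    using d by simp_all
  then have "real (m * d) \<le> real s" "real s \<ge> 2 * real d * ln (real d)"
    using s by (simp_all only: of_nat_mult mult.assoc ring_distribs)
  then have "real (card (bad_draws m d s)) \<le> (real d ^ m) ^ s * nonspanning_bound m d"
    by (intro card_bad_draws_le[OF m d]) (simp_all only: of_nat_le_iff)
  moreover have "real (card (draws m d s)) = (real d ^ m) ^ s" "(real d ^ m) ^ s > 0"
    using d by (simp_all add: card_draws)
  ultimately show ?thesis
    by (simp add: divide_le_eq mult.commute)
qed

lemma bad_draws_no_attributes:
  assumes "s \<ge> 1"
  shows "bad_draws 0 d s = {}"
proof -
  have "set w = attrs 0 d" if "w \<in> draws 0 d s" for w
    using that assms by (cases w) (auto simp: draws_def attrs_def)
  then show ?thesis
    by (auto simp: bad_draws_def affinely_spanning_def zero_set_def)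
qed

lemma bad_draws_fraction_eventually_lt:
  assumes c: "c > 0"
  obtains D where "\<And>d s. d \<ge> D \<Longrightarrow> real s \<ge> 2 * c * (real m * real d + real d * ln (real d)) \<Longrightarrow>
    real (card (bad_draws m d s)) / real (card (draws m d s)) < 1 / c"
proof (cases "c < 1")
  case True
  have "real (card (bad_draws m d s)) / real (card (draws m d s)) \<le> 1" for d s
    using card_mono[OF finite_draws, of "bad_draws m d s" m d s] by (auto simp: bad_draws_def divide_le_eq_1)
  moreover have "1 < 1 / c" using c True by simp
  ultimately show ?thesis using that by (meson le_less_trans)
next
  case False
  have scale: "2 * (real m * real d + real d * ln (real d)) \<le> 2 * c * (real m * real d + real d * ln (real d))"
    if "d \<ge> 2" for d
    using False that by (intro mult_right_mono) auto
  show ?thesis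
  proof (cases "m = 0")
    case True
    have "s \<ge> 1" if "d \<ge> 2" "real s \<ge> 2 * c * (real m * real d + real d * ln (real d))" for d s
    proof -
      have "0 < 2 * c * (real d * ln (real d))"
        using that(1) c by (simp add: ln_gt_zero)
      then show ?thesis using that(2) True by simp
    qed
    then show ?thesis
      using that[of 2] True c by (simp add: bad_draws_no_attributes)
  next
    case False
    then have m: "m \<ge> 1" by simp
    obtain D where D: "\<And>d. d \<ge> D \<Longrightarrow> nonspanning_bound m d < 1 / c"
      using order_tendstoD(2)[OF nonspanning_bound_tendsto_0[OF m], of "1 / c"] c
      by (auto simp: eventually_sequentially)
    show ?thesis
    proof (rule that[of "max D 2"])
      fix d s assume d: "max D 2 \<le> d" and s: "real s \<ge> 2 * c * (real m * real d + real d * ln (real d))"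
      have "real (card (bad_draws m d s)) / real (card (draws m d s)) \<le> nonspanning_bound m d"
        using d s scale[of d] by (intro bad_draws_fraction_le[OF m]) auto
      also have "\<dots> < 1 / c"
        using d by (intro D) auto
      finally show "real (card (bad_draws m d s)) / real (card (draws m d s)) < 1 / c" .
    qed
  qed
qed

section \<open>Extrapolation from an affinely spanning support\<close>

lemma partition_fn_pos:
  fixes E :: "'a::euclidean_space \<Rightarrow> nat \<times> nat \<Rightarrow> real"
  assumes "AED_family m d E" "z \<in> attrs m d"
  shows "partition_fn m d E z > 0"
proof -
  have int: "integrable lborel (\<lambda>x. exp (- inner_md m d (sigma z) (E x)))"
    using assms unfolding AED_family_def by blast
  have "\<not> (AE x in lborel. exp (- inner_md m d (sigma z) (E x)) = 0)"
  proof
    assume "AE x in lborel. exp (- inner_md m d (sigma z) (E x)) = 0"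
    then have "ae_filter (lborel :: 'a measure) = bot"
      by (simp add: eventually_False)
    then show False
      by (simp add: ae_filter_eq_bot_iff)
  qed
  then have "partition_fn m d E z \<noteq> 0"
    using integral_nonneg_eq_0_iff_AE[OF int] unfolding partition_fn_def by simp
  moreover have "partition_fn m d E z \<ge> 0"
    unfolding partition_fn_def by (rule integral_nonneg_AE) simp
  ultimately show ?thesis
    by simp
qed

lemma pmf_eq_if_agree_on_finite_support:
  assumes "finite (set_pmf q)" "\<And>z. z \<in> set_pmf q \<Longrightarrow> pmf p z = pmf q z"
  shows "p = q"
proof (rule pmf_eqI)
  have "measure_pmf.prob p (set_pmf q) = (\<Sum>z\<in>set_pmf q. pmf q z)"
    using assms by (simp add: measure_measure_pmf_finite)
  also have "\<dots> = 1"
    using assms(1) by (simp add: sum_pmf_eq_1)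
  finally have "set_pmf p \<subseteq> set_pmf q"
    by (auto simp: measure_pmf.prob_eq_1 AE_measure_pmf_iff)
  fix z
  show "pmf p z = pmf q z"
    using assms(2) \<open>set_pmf p \<subseteq> set_pmf q\<close> by (cases "z \<in> set_pmf q") (auto simp: set_pmf_iff)
qed

lemma marginal_pos:
  assumes AED: "AED_family m d E" and pz: "set_pmf pz \<subseteq> attrs m d"
  shows "marginal m d E pz x > 0"
  unfolding marginal_def
proof (rule sum_pos)
  show "finite (set_pmf pz)"
    using pz finite_attrs by (rule finite_subset)
  show "set_pmf pz \<noteq> {}"
    by (rule set_pmf_not_empty)
  fix z assume "z \<in> set_pmf pz"
  then show "0 < pmf pz z * cond_dens m d E z x"
    using pz partition_fn_pos[OF AED] by (auto simp: cond_dens_def set_pmf_eq')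
qed

lemma energy_gap_if_aec_fits:
  fixes Eh E :: "'a::euclidean_space \<Rightarrow> nat \<times> nat \<Rightarrow> real"
    and m d :: nat and Bh :: "nat list \<Rightarrow> real" and pz :: "nat list pmf" and x :: 'a
  defines "S \<equiv> (\<Sum>z'\<in>set_pmf pz. aec_term m d Eh Bh pz z' x)"
  assumes fit: "aec m d Eh Bh pz z x = posterior m d E pz z x"
    and pos: "pmf pz z > 0" "partition_fn m d E z > 0" "S > 0" "marginal m d E pz x > 0"
  shows "inner_md m d (sigma z) (Eh x) - inner_md m d (sigma z) (E x) + ln (S / marginal m d E pz x)
    = ln (partition_fn m d E z) - Bh z"
proof -
  let ?I = "\<lambda>v. inner_md m d (sigma z) v"
  have "ln (aec m d Eh Bh pz z x) = - ?I (Eh x) + ln (pmf pz z) - Bh z - ln S"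
    unfolding aec_def S_def[symmetric] using pos by (simp add: aec_term_def ln_div)
  moreover have "ln (posterior m d E pz z x)
      = ln (pmf pz z) - ?I (E x) - ln (partition_fn m d E z) - ln (marginal m d E pz x)"
    unfolding posterior_def cond_dens_def using pos by (simp add: ln_div ln_mult)
  ultimately show ?thesis
    using fit pos by (simp add: ln_div)
qed

lemma affinely_spanning_extends:
  assumes spanning: "affinely_spanning m d T" and T: "T \<subseteq> attrs m d"
    and gap: "\<And>z x. z \<in> T \<Longrightarrow> inner_md m d (sigma z) (F x) + g x = b z"
    and z: "z \<in> attrs m d"
  shows "inner_md m d (sigma z) (F x) + g x = inner_md m d (sigma z) (F x0) + g x0"
proof -
  let ?v = "\<lambda>p. F x p - F x0 p" and ?t = "g x - g x0"
  have "T \<subseteq> zero_set m d ?v ?t"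
  proof
    fix z assume z: "z \<in> T"
    then show "z \<in> zero_set m d ?v ?t"
      using T gap[OF z, of x] gap[OF z, of x0] by (auto simp: zero_set_def inner_md_diff)
  qed
  then have "z \<in> zero_set m d ?v ?t"
    using spanning z unfolding affinely_spanning_def by blast
  then show ?thesis
    by (simp add: zero_set_def inner_md_diff)
qed

lemma extrap_bias_eq_if_energy_shift:
  fixes Eh E :: "'a::euclidean_space \<Rightarrow> nat \<times> nat \<Rightarrow> real"
    and m d :: nat and Bh :: "nat list \<Rightarrow> real" and pz :: "nat list pmf"
  defines "S \<equiv> \<lambda>x. \<Sum>z'\<in>set_pmf pz. aec_term m d Eh Bh pz z' x"
  assumes shift: "\<And>x. inner_md m d (sigma z) (Eh x)
      = inner_md m d (sigma z) (E x) - ln (S x / marginal m d E pz x) + \<kappa>"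
    and pos: "partition_fn m d E z > 0" "\<And>x. S x > 0" "\<And>x. marginal m d E pz x > 0"
  shows "extrap_bias m d E Eh Bh pz z = ln (partition_fn m d E z) - \<kappa>"
proof -
  have "marginal m d E pz x * (exp (- inner_md m d (sigma z) (Eh x)) / S x)
      = exp (- inner_md m d (sigma z) (E x)) * exp (- \<kappa>)" for x
    using pos(2,3)[of x] by (simp add: shift exp_add exp_diff exp_minus field_simps)
  then have "extrap_bias m d E Eh Bh pz z = ln (\<integral>x. exp (- inner_md m d (sigma z) (E x)) * exp (- \<kappa>) \<partial>lborel)"
    unfolding extrap_bias_def S_def by simp
  also have "\<dots> = ln (partition_fn m d E z) - \<kappa>"
    using pos(1) by (simp add: partition_fn_def ln_mult)
  finally show ?thesis .
qed

lemma crm_eq_posterior_if_energy_shift: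
  assumes AED: "AED_family m d E" and q: "set_pmf q = attrs m d"
    and shift: "\<And>z x. z \<in> attrs m d \<Longrightarrow>
      inner_md m d (sigma z) (Eh x) = inner_md m d (sigma z) (E x) - g x + \<kappa> z"
    and B: "\<And>z. z \<in> attrs m d \<Longrightarrow> B z = ln (partition_fn m d E z) - \<kappa> z"
    and z: "z \<in> attrs m d"
  shows "crm m d Eh B q z x = posterior m d E q z x"
proof -
  have crm_term_eq: "crm_term m d Eh B q z' x = exp (g x) * (pmf q z' * cond_dens m d E z' x)"
    if z': "z' \<in> attrs m d" for z'
  proof -
    have "pmf q z' > 0" "partition_fn m d E z' > 0"
      using q z' partition_fn_pos[OF AED z'] by (auto simp: set_pmf_eq')
    then show ?thesis
      unfolding crm_term_def cond_dens_def shift[OF z'] B[OF z']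
      by (simp add: exp_add exp_diff exp_minus field_simps)
  qed
  have "crm m d Eh B q z x = exp (g x) * (pmf q z * cond_dens m d E z x)
      / (\<Sum>z'\<in>attrs m d. exp (g x) * (pmf q z' * cond_dens m d E z' x))"
    unfolding crm_def q using crm_term_eq z by (simp cong: sum.cong)
  also have "\<dots> = posterior m d E q z x"
    by (simp add: posterior_def marginal_def q sum_distrib_left[symmetric])
  finally show ?thesis .
qed

definition crm_extrapolates ::
  "nat \<Rightarrow> nat \<Rightarrow> ('a::euclidean_space \<Rightarrow> nat \<times> nat \<Rightarrow> real) \<Rightarrow> nat list pmf \<Rightarrow> nat list set \<Rightarrow> bool" where
  "crm_extrapolates m d E q T \<longleftrightarrow>
     (\<forall>pz::nat list pmf. set_pmf pz = T \<longrightarrow>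
        (\<forall>(Eh::'a \<Rightarrow> nat \<times> nat \<Rightarrow> real) (Bh::nat list \<Rightarrow> real).
           (\<forall>z\<in>T. \<forall>x. aec m d Eh Bh pz z x = posterior m d E pz z x) \<longrightarrow>
           (\<forall>qh::nat list pmf. (\<forall>z\<in>attrs m d. pmf qh z = pmf q z) \<longrightarrow>
              (\<forall>z\<in>attrs m d. \<forall>x.
                 crm m d Eh (extrap_bias m d E Eh Bh pz) qh z x = posterior m d E q z x))))"

lemma affinely_spanning_imp_crm_extrapolates:
  assumes AED: "AED_family m d E" and q: "set_pmf q = attrs m d"
    and T: "T \<subseteq> attrs m d" and spanning: "affinely_spanning m d T"
  shows "crm_extrapolates m d E q T"
  unfolding crm_extrapolates_def
proof (intro allI impI ballI)
  fix pz :: "nat list pmf" and Eh Bh qh z x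
  assume pz: "set_pmf pz = T"
    and fit: "\<forall>z\<in>T. \<forall>x. aec m d Eh Bh pz z x = posterior m d E pz z x"
    and qh: "\<forall>z\<in>attrs m d. pmf qh z = pmf q z" and z: "z \<in> attrs m d"
  have "qh = q"
    using qh q by (intro pmf_eq_if_agree_on_finite_support) (auto simp: finite_attrs)
  have pz_pos: "pmf pz z' > 0" if "z' \<in> T" for z'
    using that pz by (auto simp: set_pmf_eq')
  define S where "S x = (\<Sum>z'\<in>set_pmf pz. aec_term m d Eh Bh pz z' x)" for x
  define g where "g x = ln (S x / marginal m d E pz x)" for x
  have S_pos: "S x > 0" for x
    unfolding S_def using finite_subset[OF T finite_attrs] pz set_pmf_not_empty[of pz]
    by (intro sum_pos) (auto simp: aec_term_def)
  have marginal_pos: "marginal m d E pz x > 0" for x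
    using marginal_pos[OF AED] pz T by simp
  have gap: "inner_md m d (sigma z') (\<lambda>p. Eh x p - E x p) + g x = ln (partition_fn m d E z') - Bh z'"
    if z': "z' \<in> T" for z' x
  proof -
    have "aec m d Eh Bh pz z' x = posterior m d E pz z' x"
      using fit z' by blast
    moreover have "partition_fn m d E z' > 0"
      using z' T partition_fn_pos[OF AED] by blast
    ultimately show ?thesis
      using energy_gap_if_aec_fits[OF _ pz_pos[OF z'] _ S_pos[of x, unfolded S_def] marginal_pos[of x]]
      by (simp add: inner_md_diff g_def S_def)
  qed
  define \<kappa> where "\<kappa> z' = inner_md m d (sigma z') (Eh 0) - inner_md m d (sigma z') (E 0) + g 0" for z'
  have shift: "inner_md m d (sigma z') (Eh x') = inner_md m d (sigma z') (E x') - g x' + \<kappa> z'"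
    if "z' \<in> attrs m d" for z' x'
    using affinely_spanning_extends[of m d T "\<lambda>x p. Eh x p - E x p" g
        "\<lambda>z. ln (partition_fn m d E z) - Bh z" z' x' 0, OF spanning T gap that]
    by (simp add: \<kappa>_def inner_md_diff)
  have bias: "extrap_bias m d E Eh Bh pz z' = ln (partition_fn m d E z') - \<kappa> z'"
    if "z' \<in> attrs m d" for z'
    using shift[OF that] S_pos marginal_pos partition_fn_pos[OF AED that]
    by (intro extrap_bias_eq_if_energy_shift) (simp_all add: S_def g_def)
  show "crm m d Eh (extrap_bias m d E Eh Bh pz) qh z x = posterior m d E q z x"
    unfolding \<open>qh = q\<close> by (rule crm_eq_posterior_if_energy_shift[OF AED q shift bias z])
qed

lemma prob_crm_extrapolates_ge:
  assumes AED: "AED_family m d E" and q: "set_pmf q = attrs m d"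
  shows "measure_pmf.prob (pmf_of_set (draws m d s)) {\<omega>. crm_extrapolates m d E q (set \<omega>)}
    \<ge> 1 - real (card (bad_draws m d s)) / real (card (draws m d s))"
proof -
  let ?D = "draws m d s" and ?good = "{\<omega>. crm_extrapolates m d E q (set \<omega>)}"
  have "attrs m d \<noteq> {}"
    using q set_pmf_not_empty[of q] by simp
  then obtain z0 where "z0 \<in> attrs m d"
    by blast
  then have "replicate s z0 \<in> ?D"
    by (auto simp: draws_def)
  then have D_nonempty: "?D \<noteq> {}" by blast
  then have card_pos: "real (card ?D) > 0"
    using finite_draws by (simp add: card_gt_0_iff)
  have bad_sub: "bad_draws m d s \<subseteq> ?D"
    by (auto simp: bad_draws_def)
  have "?D - bad_draws m d s \<subseteq> ?D \<inter> ?good"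
  proof
    fix w assume "w \<in> ?D - bad_draws m d s"
    then have "w \<in> ?D" "set w \<subseteq> attrs m d" "affinely_spanning m d (set w)"
      by (auto simp: bad_draws_def draws_def)
    then show "w \<in> ?D \<inter> ?good"
      by (simp add: affinely_spanning_imp_crm_extrapolates[OF AED q])
  qed
  then have "card (?D - bad_draws m d s) \<le> card (?D \<inter> ?good)"
    by (rule card_mono[rotated]) (simp add: finite_draws)
  moreover have "card (?D - bad_draws m d s) = card ?D - card (bad_draws m d s)"
    by (rule card_Diff_subset[OF finite_subset[OF bad_sub finite_draws] bad_sub])
  moreover have "card (bad_draws m d s) \<le> card ?D"
    by (rule card_mono[OF finite_draws bad_sub])
  ultimately have "real (card ?D) - real (card (bad_draws m d s)) \<le> real (card (?D \<inter> ?good))"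
    by linarith
  then have "(real (card ?D) - real (card (bad_draws m d s))) / real (card ?D)
      \<le> real (card (?D \<inter> ?good)) / real (card ?D)"
    using card_pos by (intro divide_right_mono) auto
  then have "1 - real (card (bad_draws m d s)) / real (card ?D) \<le> real (card (?D \<inter> ?good)) / real (card ?D)"
    using card_pos by (simp add: diff_divide_distrib)
  also have "\<dots> = measure_pmf.prob (pmf_of_set ?D) ?good"
    by (rule measure_pmf_of_set[OF D_nonempty finite_draws, symmetric])
  finally show ?thesis .
qed

lemma prob_crm_extrapolates_eventually_gt:
  assumes c: "c > 0"
  shows "\<exists>D::nat. \<forall>d\<ge>D. \<forall>s (E::'a::euclidean_space \<Rightarrow> nat \<times> nat \<Rightarrow> real) q.
    AED_family m d E \<longrightarrow> set_pmf q = attrs m d \<longrightarrow>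
    real s \<ge> 2 * c * (real m * real d + real d * ln (real d)) \<longrightarrow>
    measure_pmf.prob (pmf_of_set (draws m d s)) {\<omega>. crm_extrapolates m d E q (set \<omega>)} > 1 - 1 / c"
proof -
  obtain D where D: "\<And>d s. d \<ge> D \<Longrightarrow> real s \<ge> 2 * c * (real m * real d + real d * ln (real d)) \<Longrightarrow>
      real (card (bad_draws m d s)) / real (card (draws m d s)) < 1 / c"
    using bad_draws_fraction_eventually_lt[OF c] by blast
  show ?thesis
  proof (intro exI[of _ D] allI impI)
    fix d s and E :: "'a \<Rightarrow> nat \<times> nat \<Rightarrow> real" and q :: "nat list pmf"
    assume d: "D \<le> d" and AED: "AED_family m d E" and q: "set_pmf q = attrs m d"
      and s: "2 * c * (real m * real d + real d * ln (real d)) \<le> real s"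
    show "measure_pmf.prob (pmf_of_set (draws m d s)) {\<omega>. crm_extrapolates m d E q (set \<omega>)} > 1 - 1 / c"
      using D[OF d s] prob_crm_extrapolates_ge[OF AED q, of s] by linarith
  qed
qed

theorem theorem3:
  shows "\<forall>(m::nat) (c::real). c > 0 \<longrightarrow>
    (\<exists>D::nat. \<forall>d\<ge>D. \<forall>(s::nat) (E::real^'n \<Rightarrow> nat \<times> nat \<Rightarrow> real) (q::nat list pmf).
       AED_family m d E \<longrightarrow>
       set_pmf q = attrs m d \<longrightarrow>
       real s \<ge> 2 * c * (real m * real d + real d * ln (real d)) \<longrightarrow>
       measure_pmf.prob (pmf_of_set (draws m d s))
         {\<omega>. \<forall>pz::nat list pmf. set_pmf pz = set \<omega> \<longrightarrow>
              (\<forall>(Eh::real^'n \<Rightarrow> nat \<times> nat \<Rightarrow> real) (Bh::nat list \<Rightarrow> real).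
                 (\<forall>z\<in>set \<omega>. \<forall>x. aec m d Eh Bh pz z x = posterior m d E pz z x) \<longrightarrow>
                 (\<forall>qh::nat list pmf. (\<forall>z\<in>attrs m d. pmf qh z = pmf q z) \<longrightarrow>
                    (\<forall>z\<in>attrs m d. \<forall>x.
                       crm m d Eh (extrap_bias m d E Eh Bh pz) qh z x = posterior m d E q z x)))}
         > 1 - 1 / c)"
  by (intro allI impI) (erule prob_crm_extrapolates_eventually_gt[unfolded crm_extrapolates_def])

end
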